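(* Let $(M,g)$ be a gas giant and let $\varepsilon>0$ be sufficiently small. Fix $y\in\partial M$ and $\eta\in T^*_y\partial M$ with $h^{ij}(0,y)\eta_i\eta_j=1$. For $0<s<\varepsilon$ let $\sigma_s=(s,\eta)\in T^*_{(0,y)}M$, i.e. $\xi=s$. Let $\gamma_s(t)=\phi_t(0,y,\sigma_s)$ for $t\in[0,\tau(0,y,\sigma_s)]$, and let $l(\gamma_s)>0$ be its length. Then $\gamma_s(t)\to(0,y,0,\eta)$ in $T^*M$ as $s\to0$, uniformly in $t\in[0,\tau(0,y,\sigma_s)]$, and $l(\gamma_s)\to0$ as $s\to0$.
   Context: Gas giant setting. $M$ is a compact manifold with boundary, $\dim M=n\ge 2$, and $g=\rho^{-1}\bar g$ with $\bar g$ smooth up to the boundary and $\rho$ a boundary defining function. Near $\partial M$ there are coordinates $(x,y)\in[0,\varepsilon_0)\times\partial M$ in which $g=\mathrm{d}x^2+x^{-2}h(x,y,\mathrm{d}y)$, with $h_x$ a family of metrics on $\partial M$ smooth in $x$ up to $x=0$. Dual coordinates on $T^*M$ are $(\xi,\eta)$. Geodesic flow. $\phi_t$ is the Hamiltonian flow on $T^*M$ of $H=\tfrac12\xi^2+\tfrac12x^2h^{ij}\eta_i\eta_j$: - $\dot x=\xi$, - $\dot y^i=x^2h^{ij}\eta_j$, - $\dot\xi=-xh^{ij}\eta_i\eta_j-\tfrac12x^2\partial_xh^{ij}\eta_i\eta_j$, - $\dot\eta_i=-\tfrac12x^2\partial_{y^i}h^{kj}\eta_k\eta_j$. Exit time and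 length. For an initial point on $\{x=0\}$ with $\xi>0$, $\tau$ denotes the first positive time at which $x$ returns to $0$. The flow from $(0,y,\sigma_s)$ has constant $g$-speed $s$, so its length is $l(\gamma_s)=s\,\tau(0,y,\sigma_s)$. *)

theory Defs
  imports "HOL-Analysis.Analysis"
begin

fun Ck_on :: "nat \<Rightarrow> ('a::euclidean_space \<Rightarrow> real) \<Rightarrow> 'a set \<Rightarrow> bool" where
  "Ck_on 0 f U = continuous_on U f"
| "Ck_on (Suc k) f U =
     ((\<forall>p\<in>U. f differentiable (at p)) \<and>
      (\<forall>b\<in>Basis. Ck_on k (\<lambda>p. frechet_derivative f (at p) b) U))"

definition smooth_on :: "('a::euclidean_space \<Rightarrow> real) \<Rightarrow> 'a set \<Rightarrow> bool" where
  "smooth_on f U \<longleftrightarrow> (\<forall>k. Ck_on k f U)"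

text \<open>Collar coordinates near the boundary: x :: real, y :: real^'m (a chart of the boundary,
  dim 'm = n - 1). hinv x y is the matrix (h^{ij}(x,y)).\<close>

definition hquad :: "(real \<Rightarrow> real^'m \<Rightarrow> real^'m^'m) \<Rightarrow> real \<Rightarrow> real^'m \<Rightarrow> real^'m \<Rightarrow> real" where
  "hquad hinv x y \<eta> = (\<Sum>i\<in>UNIV. \<Sum>j\<in>UNIV. hinv x y $ i $ j * \<eta> $ i * \<eta> $ j)"

definition dx_hinv :: "(real \<Rightarrow> real^'m \<Rightarrow> real^'m^'m) \<Rightarrow> real \<Rightarrow> real^'m \<Rightarrow> 'm \<Rightarrow> 'm \<Rightarrow> real" where
  "dx_hinv hinv x y i j =
     frechet_derivative (\<lambda>(a, b). hinv a b $ i $ j) (at (x, y)) (1, 0)"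

definition dy_hinv :: "(real \<Rightarrow> real^'m \<Rightarrow> real^'m^'m) \<Rightarrow> real \<Rightarrow> real^'m \<Rightarrow> 'm \<Rightarrow> 'm \<Rightarrow> 'm \<Rightarrow> real" where
  "dy_hinv hinv x y k i j =
     frechet_derivative (\<lambda>(a, b). hinv a b $ i $ j) (at (x, y)) (0, axis k 1)"

text \<open>Hamiltonian vector field of H = xi^2/2 + x^2 h^{ij} eta_i eta_j / 2 in coordinates
  (x, y, xi, eta).\<close>
definition ham_field ::
  "(real \<Rightarrow> real^'m \<Rightarrow> real^'m^'m) \<Rightarrow> real \<times> (real^'m) \<times> real \<times> (real^'m)
     \<Rightarrow> real \<times> (real^'m) \<times> real \<times> (real^'m)" where
  "ham_field hinv p = (let x = fst p; y = fst (snd p); \<xi> = fst (snd (snd p));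
       \<eta> = snd (snd (snd p)) in
     (\<xi>,
      ((\<chi> i. x^2 * (\<Sum>j\<in>UNIV. hinv x y $ i $ j * \<eta> $ j)) :: real^'m),
      (- x * hquad hinv x y \<eta>
        - x^2 / 2 * (\<Sum>i\<in>UNIV. \<Sum>j\<in>UNIV. dx_hinv hinv x y i j * \<eta> $ i * \<eta> $ j)),
      ((\<chi> i. - (x^2 / 2 * (\<Sum>k\<in>UNIV. \<Sum>j\<in>UNIV. dy_hinv hinv x y i k j * \<eta> $ k * \<eta> $ j))) :: real^'m)))"

text \<open>gamma on [0,T] is the flow from (0, y0, s, eta0) up to the first positive return
  time T = tau(0,y0,sigma_s) of x to 0, staying in the coordinate domain U.\<close>
definition exit_trajectory ::
  "(real \<Rightarrow> real^'m \<Rightarrow> real^'m^'m) \<Rightarrow> (real \<times> (real^'m)) set \<Rightarrow> real^'m \<Rightarrow> real \<Rightarrow> real^'m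
     \<Rightarrow> (real \<Rightarrow> real \<times> (real^'m) \<times> real \<times> (real^'m)) \<Rightarrow> real \<Rightarrow> bool" where
  "exit_trajectory hinv U y0 s \<eta>0 \<gamma> T \<longleftrightarrow>
     T > 0 \<and> \<gamma> 0 = (0, y0, s, \<eta>0) \<and>
     (\<forall>t\<in>{0..T}. (fst (\<gamma> t), fst (snd (\<gamma> t))) \<in> U \<and>
        (\<gamma> has_vector_derivative ham_field hinv (\<gamma> t)) (at t within {0..T})) \<and>
     (\<forall>t\<in>{0<..<T}. fst (\<gamma> t) > 0) \<and> fst (\<gamma> T) = 0"

end

(* In the coordinates (x, y, xi, eta) Hamilton's equations read
     x' = xi,  xi' = - x Q,  y' = x^2 A,  eta' = x^2 B,
   where Q = h^{ij} eta_i eta_j + O(x) equals 1 at the glancing point (0, y0, 0, eta0).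
   On a small ball around that point, 1/4 <= Q <= C and A, B are bounded.  There the
   energy x^2 + xi^2 grows at most exponentially, so up to time 2 pi it stays O(s^2):
   x and xi are O(s), and y, eta move only by O(s^2).  Since xi' = - x Q <= - x/4 while
   x >= 0, Sturm comparison with x'' = - x/4 makes x return to 0 before time 2 pi, while
   xi >= s/2 on an initial interval makes x positive right after the start.  A continuity
   argument keeps every exit trajectory inside the ball, so it has length s T <= 2 pi s and
   stays within O(s) of the glancing point; existence follows from Picard iteration for a
   globally Lipschitz extension of the Hamiltonian field. *)

theory Submission
  imports Defs
begin

section \<open>Lipschitz functions on bounded sets\<close>

definition lipschitzian_on :: "'a::metric_space set \<Rightarrow> ('a \<Rightarrow> 'b::metric_space) \<Rightarrow> bool" where
  "lipschitzian_on S f \<longleftrightarrow> (\<exists>L. L-lipschitz_on S f)"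

lemma lipschitzian_onI: "L-lipschitz_on S f \<Longrightarrow> lipschitzian_on S f"
  unfolding lipschitzian_on_def by blast

lemma lipschitzian_onE:
  assumes "lipschitzian_on S f"
  obtains L where "L-lipschitz_on S f"
  using assms unfolding lipschitzian_on_def by blast

lemma lipschitzian_on_bounded_image:
  assumes "lipschitzian_on S f" "bounded S"
  shows "bounded (f ` S)"
proof (cases "S = {}")
  case False
  then obtain x0 where x0: "x0 \<in> S" by blast
  obtain L where L: "L-lipschitz_on S f" using assms(1) by (rule lipschitzian_onE)
  obtain B where B: "\<forall>x\<in>S. dist x0 x \<le> B" using assms(2) bounded_any_center by blast
  have "dist (f x0) (f x) \<le> L * B" if "x \<in> S" for x
    using lipschitz_onD[OF L x0 that] mult_left_mono[OF bspec[OF B that] lipschitz_on_nonneg[OF L]]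
    by linarith
  then show ?thesis unfolding bounded_def by blast
qed simp

lemma lipschitzian_on_norm_bound:
  assumes "lipschitzian_on S f" "bounded S"
  obtains B where "0 \<le> B" "\<And>x. x \<in> S \<Longrightarrow> norm (f x) \<le> B"
  using lipschitzian_on_bounded_image[OF assms] unfolding bounded_pos by (auto intro: less_imp_le)

lemma bounded_linear_lipschitzian_on: "bounded_linear f \<Longrightarrow> lipschitzian_on S f"
  using bounded_linear.lipschitz_boundE lipschitzian_onI by metis

lemma lipschitzian_on_const: "lipschitzian_on S (\<lambda>x. c)"
  using lipschitz_on_constant by (rule lipschitzian_onI)

lemma lipschitzian_on_add:
  fixes f g :: "'a::metric_space \<Rightarrow> 'b::real_normed_vector"
  shows "lipschitzian_on S f \<Longrightarrow> lipschitzian_on S g \<Longrightarrow> lipschitzian_on S (\<lambda>x. f x + g x)"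
  unfolding lipschitzian_on_def using lipschitz_on_add by blast

lemma lipschitzian_on_minus:
  fixes f :: "'a::metric_space \<Rightarrow> 'b::real_normed_vector"
  shows "lipschitzian_on S f \<Longrightarrow> lipschitzian_on S (\<lambda>x. - f x)"
  unfolding lipschitzian_on_def using lipschitz_on_minus by blast

lemma lipschitzian_on_mult:
  fixes f g :: "'a::metric_space \<Rightarrow> 'b::real_normed_algebra"
  assumes f: "lipschitzian_on S f" and g: "lipschitzian_on S g" and S: "bounded S"
  shows "lipschitzian_on S (\<lambda>x. f x * g x)"
proof -
  obtain Lf where Lf: "Lf-lipschitz_on S f" using f by (rule lipschitzian_onE)
  obtain Lg where Lg: "Lg-lipschitz_on S g" using g by (rule lipschitzian_onE)
  obtain Bf where Bf: "0 \<le> Bf" "\<And>x. x \<in> S \<Longrightarrow> norm (f x) \<le> Bf"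
    using lipschitzian_on_norm_bound[OF f S] by blast
  obtain Bg where Bg: "0 \<le> Bg" "\<And>x. x \<in> S \<Longrightarrow> norm (g x) \<le> Bg"
    using lipschitzian_on_norm_bound[OF g S] by blast
  have "dist (f x * g x) (f y * g y) \<le> (Bf * Lg + Lf * Bg) * dist x y" if "x \<in> S" "y \<in> S" for x y
  proof -
    have "f x * g x - f y * g y = f x * (g x - g y) + (f x - f y) * g y"
      by (simp add: algebra_simps)
    then have "dist (f x * g x) (f y * g y) \<le> norm (f x) * norm (g x - g y) + norm (f x - f y) * norm (g y)"
      unfolding dist_norm by (metis norm_mult_ineq norm_triangle_le add_mono)
    also have "\<dots> \<le> Bf * (Lg * dist x y) + (Lf * dist x y) * Bg"
      using that Bf Bg lipschitz_onD[OF Lf that] lipschitz_onD[OF Lg that] lipschitz_on_nonneg[OF Lf]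
      by (intro add_mono mult_mono) (simp_all add: dist_norm)
    finally show ?thesis by (simp add: algebra_simps)
  qed
  moreover have "0 \<le> Bf * Lg + Lf * Bg"
    using Bf Bg lipschitz_on_nonneg[OF Lf] lipschitz_on_nonneg[OF Lg] by simp
  ultimately show ?thesis
    by (intro lipschitzian_onI lipschitz_onI)
qed

lemma lipschitzian_on_power:
  fixes f :: "'a::metric_space \<Rightarrow> 'b::real_normed_algebra_1"
  assumes "lipschitzian_on S f" "bounded S"
  shows "lipschitzian_on S (\<lambda>x. f x ^ n)"
  by (induction n) (simp_all add: lipschitzian_on_const lipschitzian_on_mult assms)

lemma lipschitzian_on_sum:
  fixes f :: "'i \<Rightarrow> 'a::metric_space \<Rightarrow> 'b::real_normed_vector"
  assumes "\<And>i. i \<in> I \<Longrightarrow> lipschitzian_on S (f i)"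
  shows "lipschitzian_on S (\<lambda>x. \<Sum>i\<in>I. f i x)"
proof (cases "finite I")
  case True
  then show ?thesis
    using assms by (induction I rule: finite_induct) (auto intro: lipschitzian_on_const lipschitzian_on_add)
qed (simp add: lipschitzian_on_const)

lemma lipschitzian_on_compose:
  assumes "lipschitzian_on S f" "lipschitzian_on T g" "f ` S \<subseteq> T"
  shows "lipschitzian_on S (\<lambda>x. g (f x))"
  using assms lipschitz_on_compose2 lipschitz_on_subset unfolding lipschitzian_on_def by metis

lemma lipschitzian_on_Pair:
  "lipschitzian_on S f \<Longrightarrow> lipschitzian_on S g \<Longrightarrow> lipschitzian_on S (\<lambda>x. (f x, g x))"
  unfolding lipschitzian_on_def using lipschitz_on_Pair by blast

lemma lipschitzian_on_vec:
  fixes f :: "'a::metric_space \<Rightarrow> real^'n"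
  assumes "\<And>i. lipschitzian_on S (\<lambda>x. f x $ i)"
  shows "lipschitzian_on S f"
proof -
  obtain L where L: "\<And>i. (L i)-lipschitz_on S (\<lambda>x. f x $ i)"
    using assms unfolding lipschitzian_on_def by metis
  have "dist (f x) (f y) \<le> (\<Sum>i\<in>UNIV. L i) * dist x y" if "x \<in> S" "y \<in> S" for x y
  proof -
    have "dist (f x) (f y) \<le> (\<Sum>i\<in>UNIV. \<bar>f x $ i - f y $ i\<bar>)"
      unfolding dist_norm using norm_le_l1_cart[of "f x - f y"] by simp
    also have "\<dots> \<le> (\<Sum>i\<in>UNIV. L i * dist x y)"
      using lipschitz_onD[OF L that] by (intro sum_mono) (simp add: dist_real_def)
    finally show ?thesis by (simp add: sum_distrib_right)
  qed
  moreover have "0 \<le> (\<Sum>i\<in>UNIV. L i)"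
    using lipschitz_on_nonneg[OF L] by (simp add: sum_nonneg)
  ultimately show ?thesis by (intro lipschitzian_onI lipschitz_onI)
qed

lemma lipschitzian_on_divide:
  fixes f :: "'a::metric_space \<Rightarrow> real"
  assumes "lipschitzian_on S f"
  shows "lipschitzian_on S (\<lambda>x. f x / c)"
proof -
  obtain L where "L-lipschitz_on S f" using assms by (rule lipschitzian_onE)
  from lipschitz_on_cmult_real[OF this, of "inverse c"] show ?thesis
    unfolding divide_inverse mult.commute[of _ "inverse c"] by (rule lipschitzian_onI)
qed

lemma lipschitzian_on_vec_nth:
  fixes f :: "'a::metric_space \<Rightarrow> real^'n"
  assumes "lipschitzian_on S f"
  shows "lipschitzian_on S (\<lambda>x. f x $ i)"
  by (rule lipschitzian_on_compose[OF assms bounded_linear_lipschitzian_on[OF bounded_linear_vec_nth, of UNIV]])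
    simp

lemma Ck_on_imp_continuous_on: "Ck_on k f U \<Longrightarrow> continuous_on U f"
  by (cases k) (auto intro: differentiable_imp_continuous_within continuous_at_imp_continuous_on)

lemma Ck_on_Suc_imp_lipschitzian_on:
  fixes f :: "'a::euclidean_space \<Rightarrow> real"
  assumes f: "Ck_on (Suc k) f U" and K: "K \<subseteq> U" "compact K" "convex K"
  shows "lipschitzian_on K f"
proof -
  define D where "D p = frechet_derivative f (at p)" for p
  have deriv: "(f has_derivative D p) (at p within K)" if "p \<in> K" for p
    using f K that unfolding D_def by (auto intro: has_derivative_at_withinI simp: frechet_derivative_works)
  have "continuous_on K (\<lambda>p. \<Sum>b\<in>Basis. \<bar>D p b\<bar>)"
    using f K(1) unfolding D_def
    by (auto intro!: continuous_intros continuous_on_subset[OF Ck_on_imp_continuous_on])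
  then have "bounded ((\<lambda>p. \<Sum>b\<in>Basis. \<bar>D p b\<bar>) ` K)"
    using K(2) by (intro compact_imp_bounded compact_continuous_image)
  then obtain B where B: "0 \<le> B" "\<And>p. p \<in> K \<Longrightarrow> (\<Sum>b\<in>Basis. \<bar>D p b\<bar>) \<le> B"
    unfolding bounded_pos by (auto intro: less_imp_le)
  have "onorm (D p) \<le> B" if "p \<in> K" for p
    using onorm_componentwise[OF has_derivative_bounded_linear[OF deriv[OF that]]] B(2)[OF that]
    by simp
  then show ?thesis
    using bounded_derivative_imp_lipschitz[OF deriv K(3) _ B(1)] by (blast intro: lipschitzian_onI)
qed

section \<open>Calculus on intervals and integral curves\<close>

lemma DERIV_within_nonpos_imp_decreasing:
  fixes f :: "real \<Rightarrow> real"
  assumes deriv: "\<And>u. u \<in> {a..b} \<Longrightarrow> (f has_real_derivative f' u) (at u within {a..b})"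
    and nonpos: "\<And>u. u \<in> {a..b} \<Longrightarrow> f' u \<le> 0" and t: "t \<in> {a..b}"
  shows "f t \<le> f a"
proof -
  have "continuous_on {a..b} f"
    using deriv DERIV_continuous continuous_on_eq_continuous_within by blast
  then have "continuous_on {a..t} f" by (rule continuous_on_subset) (use t in auto)
  moreover have "\<exists>y. DERIV f u :> y \<and> y \<le> 0" if "a < u" "u < t" for u
    using deriv[of u] nonpos[of u] at_within_Icc_at[of a u b] that t by auto
  ultimately show ?thesis
    using DERIV_nonpos_imp_decreasing_open[of a t f] t by auto
qed

lemma DERIV_within_nonneg_imp_increasing:
  fixes f :: "real \<Rightarrow> real"
  assumes "\<And>u. u \<in> {a..b} \<Longrightarrow> (f has_real_derivative f' u) (at u within {a..b})"
    and "\<And>u. u \<in> {a..b} \<Longrightarrow> 0 \<le> f' u" and "t \<in> {a..b}"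
  shows "f a \<le> f t"
proof -
  have "- f t \<le> - f a"
    by (rule DERIV_within_nonpos_imp_decreasing[of a b "\<lambda>u. - f u" "\<lambda>u. - f' u"])
      (use assms in \<open>auto intro: DERIV_minus\<close>)
  then show ?thesis by simp
qed

lemma has_vector_derivative_bound_imp_norm_diff_le:
  fixes f :: "real \<Rightarrow> 'b::real_normed_vector"
  assumes deriv: "\<And>u. u \<in> {a..b} \<Longrightarrow> (f has_vector_derivative f' u) (at u within {a..b})"
    and bound: "\<And>u. u \<in> {a..b} \<Longrightarrow> norm (f' u) \<le> B" and t: "t \<in> {a..b}"
  shows "norm (f t - f a) \<le> B * (t - a)"
proof -
  have "norm (f t - f a) \<le> B * norm (t - a)"
  proof (rule differentiable_bound[of "{a..t}" f "\<lambda>u h. h *\<^sub>R f' u"])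
    fix u assume u: "u \<in> {a..t}"
    then have "(f has_vector_derivative f' u) (at u within {a..t})"
      using t by (intro has_vector_derivative_within_subset[OF deriv]) auto
    then show "(f has_derivative (\<lambda>h. h *\<^sub>R f' u)) (at u within {a..t})"
      by (simp add: has_vector_derivative_def)
    show "onorm (\<lambda>h. h *\<^sub>R f' u) \<le> B"
      using bound[of u] u t by (intro onorm_le) (simp add: mult.commute[of B] mult_left_mono)
  qed (use t in auto)
  then show ?thesis using t by simp
qed

lemma continuous_on_first_crossing:
  fixes f :: "real \<Rightarrow> real"
  assumes f: "continuous_on {a..b} f" and start: "f a < c" and t: "t \<in> {a..b}" "c \<le> f t"
  obtains t1 where "t1 \<in> {a<..t}" "f t1 = c" "\<And>u. u \<in> {a..<t1} \<Longrightarrow> f u < c"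
proof -
  define S where "S = {u \<in> {a..t}. c \<le> f u}"
  have ft: "continuous_on {a..t} f" by (rule continuous_on_subset[OF f]) (use t in auto)
  have "closed S"
    unfolding S_def using continuous_closed_preimage[OF ft closed_atLeastAtMost closed_atLeast]
    by (simp add: vimage_def Int_def)
  have bdd: "bdd_below S" unfolding S_def by (rule bdd_belowI[of _ a]) auto
  have "S \<noteq> {}" using t unfolding S_def by auto
  define t1 where "t1 = Inf S"
  have t1: "a \<le> t1" "t1 \<le> t" "c \<le> f t1"
    using closed_contains_Inf[OF \<open>S \<noteq> {}\<close> bdd \<open>closed S\<close>] unfolding t1_def S_def by auto
  have below: "f u < c" if u: "u \<in> {a..<t1}" for u
  proof (rule ccontr)
    assume "\<not> f u < c"
    then have "u \<in> S" using u t1 unfolding S_def by auto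
    then have "t1 \<le> u" unfolding t1_def using bdd by (rule cInf_lower)
    then show False using u by simp
  qed
  have "a < t1" using t1 start by (cases "a = t1") auto
  have "continuous_on {a..t1} f" by (rule continuous_on_subset[OF ft]) (use t1 in auto)
  then obtain x where x: "a \<le> x" "x \<le> t1" "f x = c"
    using IVT'[of f a c t1] start t1 by auto
  have "x = t1"
  proof (rule ccontr)
    assume "x \<noteq> t1"
    then have "f x < c" using x by (intro below) simp
    then show False using x by simp
  qed
  show thesis
  proof (rule that)
    show "t1 \<in> {a<..t}" using t1 \<open>a < t1\<close> by simp
    show "f t1 = c" using x \<open>x = t1\<close> by simp
  qed (rule below)
qed

definition integral_curve :: "('a::real_normed_vector \<Rightarrow> 'a) \<Rightarrow> real \<Rightarrow> (real \<Rightarrow> 'a) \<Rightarrow> bool" where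
  "integral_curve \<Phi> a \<gamma> \<longleftrightarrow> (\<forall>t\<in>{0..a}. (\<gamma> has_vector_derivative \<Phi> (\<gamma> t)) (at t within {0..a}))"

lemma integral_curve_restrict:
  assumes "integral_curve \<Phi> a \<gamma>" "b \<le> a"
  shows "integral_curve \<Phi> b \<gamma>"
  unfolding integral_curve_def
proof
  fix t assume t: "t \<in> {0..b}"
  then have "(\<gamma> has_vector_derivative \<Phi> (\<gamma> t)) (at t within {0..a})"
    using assms unfolding integral_curve_def by simp
  then show "(\<gamma> has_vector_derivative \<Phi> (\<gamma> t)) (at t within {0..b})"
    by (rule has_vector_derivative_within_subset) (use assms(2) in simp)
qed

lemma integral_curve_continuous_on:
  assumes "integral_curve \<Phi> a \<gamma>"
  shows "continuous_on {0..a} \<gamma>"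
  unfolding continuous_on_eq_continuous_within
  using assms unfolding integral_curve_def by (blast intro: has_vector_derivative_continuous)

lemma integral_curve_cong:
  assumes "integral_curve \<Phi> a \<gamma>" "\<And>t. t \<in> {0..a} \<Longrightarrow> \<Phi> (\<gamma> t) = \<Psi> (\<gamma> t)"
  shows "integral_curve \<Psi> a \<gamma>"
  using assms unfolding integral_curve_def by simp

lemma power_has_integral_Icc:
  fixes b :: real
  assumes "0 \<le> b"
  shows "((\<lambda>r. r ^ k) has_integral b ^ Suc k / Suc k) {0..b}"
proof -
  have "((\<lambda>r. r ^ k) has_integral (\<lambda>r. r ^ Suc k / Suc k) b - (\<lambda>r. r ^ Suc k / Suc k) 0) {0..b}"
    apply (rule fundamental_theorem_of_calculus[OF assms])
    apply (rule has_real_derivative_iff_has_vector_derivative[THEN iffD1])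
    apply (rule derivative_eq_intros refl | simp)+
    done
  then show ?thesis by simp
qed

(* The upper limit is clamped to [0, a], so that the Picard map acts on bounded
   continuous functions on the whole real line. *)
definition picard_step :: "('a::banach \<Rightarrow> 'a) \<Rightarrow> 'a \<Rightarrow> real \<Rightarrow> (real \<Rightarrow>\<^sub>C 'a) \<Rightarrow> real \<Rightarrow>\<^sub>C 'a" where
  "picard_step G p a f = Bcontfun (\<lambda>t. p + integral {0..max 0 (min a t)} (\<lambda>r. G (f r)))"

lemma continuous_on_compose_bcontfun:
  fixes G :: "'a::metric_space \<Rightarrow> 'b::topological_space" and f :: "real \<Rightarrow>\<^sub>C 'a"
  assumes "continuous_on UNIV G"
  shows "continuous_on S (\<lambda>r. G (f r))"
  by (rule continuous_on_compose2[OF assms continuous_on_apply_bcontfun]) simp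

lemma indefinite_integral_has_vector_derivative:
  fixes G :: "'a::banach \<Rightarrow> 'a" and f :: "real \<Rightarrow>\<^sub>C 'a"
  assumes "continuous_on UNIV G" "u \<in> {0..a}"
  shows "((\<lambda>u. integral {0..u} (\<lambda>r. G (f r))) has_vector_derivative G (f u)) (at u within {0..a})"
  using continuous_on_compose_bcontfun[OF assms(1)] assms(2) by (rule integral_has_vector_derivative)

lemma picard_step_apply:
  fixes G :: "'a::banach \<Rightarrow> 'a"
  assumes G: "continuous_on UNIV G" and a: "0 \<le> a"
  shows "picard_step G p a f t = p + integral {0..max 0 (min a t)} (\<lambda>r. G (f r))"
proof -
  define I where "I = (\<lambda>u. p + integral {0..u} (\<lambda>r. G (f r)))"
  have "(\<lambda>r. G (f r)) integrable_on {0..a}"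
    using continuous_on_compose_bcontfun[OF G] by (rule integrable_continuous_interval)
  then have "continuous_on {0..a} (\<lambda>u. integral {0..u} (\<lambda>r. G (f r)))"
    by (rule indefinite_integral_continuous_1)
  then have I: "continuous_on {0..a} I"
    unfolding I_def by (rule continuous_on_add[OF continuous_on_const])
  have "continuous_on UNIV (\<lambda>t. max 0 (min a t))" by (intro continuous_intros)
  then have "continuous_on UNIV (\<lambda>t. I (max 0 (min a t)))"
    by (rule continuous_on_compose2[OF I]) (use a in auto)
  moreover have "bounded (range (\<lambda>t. I (max 0 (min a t))))"
  proof (rule bounded_subset)
    show "bounded (I ` {0..a})"
      using I by (intro compact_imp_bounded compact_continuous_image) auto
    show "range (\<lambda>t. I (max 0 (min a t))) \<subseteq> I ` {0..a}"
      using a by auto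
  qed
  ultimately have "(\<lambda>t. I (max 0 (min a t))) \<in> bcontfun" by (simp add: bcontfun_def)
  then show ?thesis unfolding picard_step_def I_def by (simp add: Bcontfun_inverse)
qed

lemma picard_step_iterate_dist:
  fixes G :: "'a::banach \<Rightarrow> 'a"
  assumes G: "L-lipschitz_on UNIV G" and a: "0 \<le> a"
  shows "dist ((picard_step G p a ^^ k) f t) ((picard_step G p a ^^ k) g t)
    \<le> (L * max 0 (min a t)) ^ k / fact k * dist f g"
proof (induction k arbitrary: t)
  case 0
  then show ?case using dist_bounded by simp
next
  case (Suc k)
  define c where "c = max 0 (min a t)"
  have c: "0 \<le> c" "c \<le> a" using a by (auto simp: c_def)
  have L: "0 \<le> L" using lipschitz_on_nonneg[OF G] .
  have contG: "continuous_on UNIV G" using lipschitz_on_continuous_on[OF G] .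
  define F where "F h = (\<lambda>r. G ((picard_step G p a ^^ k) h r))" for h
  have int: "F h integrable_on {0..c}" for h
    unfolding F_def by (intro integrable_continuous_interval continuous_on_compose_bcontfun[OF contG])
  have "((\<lambda>r. L * (L ^ k / fact k * dist f g) * r ^ k) has_integral
      L * (L ^ k / fact k * dist f g) * (c ^ Suc k / Suc k)) {0..c}"
    by (rule has_integral_mult_right[OF power_has_integral_Icc[OF c(1)]])
  then have bound: "((\<lambda>r. L * ((L * r) ^ k / fact k * dist f g)) has_integral
      L * (L ^ k / fact k * dist f g) * (c ^ Suc k / Suc k)) {0..c}"
    by (simp add: power_mult_distrib algebra_simps)
  have "dist ((picard_step G p a ^^ Suc k) f t) ((picard_step G p a ^^ Suc k) g t)
      = norm (integral {0..c} (F f) - integral {0..c} (F g))"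
    by (simp add: picard_step_apply[OF contG a] c_def F_def dist_norm)
  also have "\<dots> = norm (integral {0..c} (\<lambda>r. F f r - F g r))"
    by (simp only: integral_diff[OF int int])
  also have "\<dots> \<le> integral {0..c} (\<lambda>r. L * ((L * r) ^ k / fact k * dist f g))"
  proof (rule integral_norm_bound_integral)
    show "(\<lambda>r. F f r - F g r) integrable_on {0..c}" by (rule integrable_diff[OF int int])
    show "(\<lambda>r. L * ((L * r) ^ k / fact k * dist f g)) integrable_on {0..c}"
      using bound by blast
    fix r assume r: "r \<in> {0..c}"
    then have "max 0 (min a r) = r" using c by simp
    then have "dist ((picard_step G p a ^^ k) f r) ((picard_step G p a ^^ k) g r) \<le> (L * r) ^ k / fact k * dist f g"
      using Suc.IH[of r] by simp
    have "norm (F f r - F g r) \<le> L * dist ((picard_step G p a ^^ k) f r) ((picard_step G p a ^^ k) g r)"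
      using lipschitz_onD[OF G UNIV_I UNIV_I] by (simp add: F_def dist_norm)
    also have "\<dots> \<le> L * ((L * r) ^ k / fact k * dist f g)"
      by (rule mult_left_mono[OF _ L]) fact
    finally show "norm (F f r - F g r) \<le> L * ((L * r) ^ k / fact k * dist f g)" .
  qed
  also have "\<dots> = L * (L ^ k / fact k * dist f g) * (c ^ Suc k / Suc k)"
    using bound by (rule integral_unique)
  also have "\<dots> = (L * c) ^ Suc k / fact (Suc k) * dist f g"
    by (simp add: power_mult_distrib field_simps)
  finally show ?case unfolding c_def .
qed

lemma lipschitz_integral_curve_exists:
  fixes G :: "'a::banach \<Rightarrow> 'a"
  assumes G: "L-lipschitz_on UNIV G" and a: "0 \<le> a"
  obtains \<gamma> where "\<gamma> 0 = p" "integral_curve G a \<gamma>"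
proof -
  \<comment> \<open>Some iterate of the Picard map is a contraction; its fixed point is the curve.\<close>
  define P where "P = picard_step G p a"
  have contG: "continuous_on UNIV G" using lipschitz_on_continuous_on[OF G] .
  have L: "0 \<le> L" using lipschitz_on_nonneg[OF G] .
  have "(\<lambda>n. inverse (fact n) * (L * a) ^ n) \<longlonglongrightarrow> 0"
    by (rule summable_LIMSEQ_zero[OF summable_exp])
  then obtain k where k: "inverse (fact k) * (L * a) ^ k < 1/2"
    using order_tendstoD(2)[of _ 0 sequentially "1/2::real"] eventually_sequentially by fastforce
  have "dist ((P ^^ k) f) ((P ^^ k) g) \<le> 1/2 * dist f g" for f g
  proof (rule dist_bound)
    fix t
    have "(L * max 0 (min a t)) ^ k / fact k \<le> (L * a) ^ k / fact k"
      using a L by (intro divide_right_mono power_mono mult_left_mono) auto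
    also have "\<dots> \<le> 1/2" using k by (simp add: field_simps)
    finally have "(L * max 0 (min a t)) ^ k / fact k * dist f g \<le> 1/2 * dist f g"
      by (rule mult_right_mono) simp
    with picard_step_iterate_dist[OF G a, where p=p and k=k and f=f and t=t and g=g]
    show "dist ((P ^^ k) f t) ((P ^^ k) g t) \<le> 1/2 * dist f g"
      unfolding P_def by (rule order_trans)
  qed
  then have "\<exists>!f. (P ^^ k) f = f" by (intro banach_fix_type[of "1/2"]) auto
  then obtain f0 where f0: "(P ^^ k) f0 = f0" and uniq: "\<And>f. (P ^^ k) f = f \<Longrightarrow> f = f0"
    unfolding Ex1_def by blast
  have "(P ^^ k) (P f0) = P f0" by (metis f0 funpow_swap1)
  then have fix0: "P f0 = f0" by (rule uniq)
  have curve: "f0 t = p + integral {0..t} (\<lambda>r. G (f0 r))" if "t \<in> {0..a}" for t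
    using picard_step_apply[OF contG a, of p f0 t] fix0 that unfolding P_def by simp
  show thesis
  proof (rule that)
    show "f0 0 = p" using curve[of 0] a by simp
    show "integral_curve G a f0"
      unfolding integral_curve_def
    proof
      fix t assume t: "t \<in> {0..a}"
      have "((\<lambda>u. p + integral {0..u} (\<lambda>r. G (f0 r))) has_vector_derivative G (f0 t)) (at t within {0..a})"
        using has_vector_derivative_add[OF has_vector_derivative_const
            indefinite_integral_has_vector_derivative[OF contG t], of p] by simp
      then show "(f0 has_vector_derivative G (f0 t)) (at t within {0..a})"
      proof (rule has_vector_derivative_transform[OF t, rotated])
        fix u assume "u \<in> {0..a}"
        then show "f0 u = p + integral {0..u} (\<lambda>r. G (f0 r))" by (rule curve)
      qed
    qed
  qed
qed

lemma lipschitz_on_closest_point_extension: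
  fixes S :: "'a::euclidean_space set"
  assumes "L-lipschitz_on S f" "convex S" "closed S" "S \<noteq> {}"
  shows "L-lipschitz_on UNIV (\<lambda>x. f (closest_point S x))"
proof -
  have "1-lipschitz_on UNIV (closest_point S)"
    using closest_point_lipschitz[OF assms(2-4)] by (intro lipschitz_onI) simp_all
  moreover have "L-lipschitz_on (closest_point S ` UNIV) f"
    by (rule lipschitz_on_subset[OF assms(1)]) (use closest_point_in_set[OF assms(3,4)] in blast)
  ultimately show ?thesis using lipschitz_on_compose2 by fastforce
qed

section \<open>A model field near the glancing point\<close>

type_synonym 'm phase = "real \<times> (real^'m) \<times> real \<times> (real^'m)"

abbreviation coord_x :: "'m phase \<Rightarrow> real" where "coord_x p \<equiv> fst p"
abbreviation coord_y :: "'m phase \<Rightarrow> real^'m" where "coord_y p \<equiv> fst (snd p)"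
abbreviation coord_xi :: "'m phase \<Rightarrow> real" where "coord_xi p \<equiv> fst (snd (snd p))"
abbreviation coord_eta :: "'m phase \<Rightarrow> real^'m" where "coord_eta p \<equiv> snd (snd (snd p))"

lemma has_vector_derivative_coords:
  fixes \<gamma> :: "real \<Rightarrow> 'm::finite phase"
  assumes "(\<gamma> has_vector_derivative v) (at t within S)"
  shows "((\<lambda>t. coord_x (\<gamma> t)) has_real_derivative coord_x v) (at t within S)"
    and "((\<lambda>t. coord_y (\<gamma> t)) has_vector_derivative coord_y v) (at t within S)"
    and "((\<lambda>t. coord_xi (\<gamma> t)) has_real_derivative coord_xi v) (at t within S)"
    and "((\<lambda>t. coord_eta (\<gamma> t)) has_vector_derivative coord_eta v) (at t within S)"
proof -
  have snd2: "bounded_linear (\<lambda>p::'m phase. snd (snd p))"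
    using bounded_linear_compose[OF bounded_linear_snd bounded_linear_snd] by (simp add: o_def)
  have "bounded_linear (\<lambda>p::'m phase. coord_y p)"
    using bounded_linear_compose[OF bounded_linear_fst bounded_linear_snd] by (simp add: o_def)
  moreover have "bounded_linear (\<lambda>p::'m phase. coord_xi p)"
    using bounded_linear_compose[OF bounded_linear_fst snd2] by (simp add: o_def)
  moreover have "bounded_linear (\<lambda>p::'m phase. coord_eta p)"
    using bounded_linear_compose[OF bounded_linear_snd snd2] by (simp add: o_def)
  ultimately show "((\<lambda>t. coord_x (\<gamma> t)) has_real_derivative coord_x v) (at t within S)"
    and "((\<lambda>t. coord_y (\<gamma> t)) has_vector_derivative coord_y v) (at t within S)"
    and "((\<lambda>t. coord_xi (\<gamma> t)) has_real_derivative coord_xi v) (at t within S)"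
    and "((\<lambda>t. coord_eta (\<gamma> t)) has_vector_derivative coord_eta v) (at t within S)"
    using bounded_linear.has_vector_derivative[OF _ assms] bounded_linear_fst
    by (auto simp: has_real_derivative_iff_has_vector_derivative)
qed

lemma norm_phase_le:
  fixes p :: "'m::finite phase"
  shows "norm p \<le> \<bar>coord_x p\<bar> + norm (coord_y p) + \<bar>coord_xi p\<bar> + norm (coord_eta p)"
proof -
  have "norm p \<le> norm (coord_x p) + norm (snd p)"
    using norm_Pair_le[of "fst p" "snd p"] unfolding prod.collapse .
  moreover have "norm (snd p) \<le> norm (coord_y p) + norm (snd (snd p))"
    using norm_Pair_le[of "fst (snd p)" "snd (snd p)"] unfolding prod.collapse .
  moreover have "norm (snd (snd p)) \<le> norm (coord_xi p) + norm (coord_eta p)"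
    using norm_Pair_le[of "coord_xi p" "coord_eta p"] unfolding prod.collapse .
  ultimately show ?thesis unfolding real_norm_def by linarith
qed

locale collar_field =
  fixes F :: "'m::finite phase \<Rightarrow> 'm phase"
    and A B :: "'m phase \<Rightarrow> real^'m" and Q :: "'m phase \<Rightarrow> real"
    and C \<rho> :: real and y0 \<eta>0 :: "real^'m"
  assumes field_x: "coord_x (F p) = coord_xi p"
    and field_y: "coord_y (F p) = coord_x p ^ 2 *\<^sub>R A p"
    and field_xi: "coord_xi (F p) = - coord_x p * Q p"
    and field_eta: "coord_eta (F p) = coord_x p ^ 2 *\<^sub>R B p"
    and radius_pos: "0 < \<rho>"
    and A_bound: "p \<in> cball (0, y0, 0, \<eta>0) \<rho> \<Longrightarrow> norm (A p) \<le> C"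
    and B_bound: "p \<in> cball (0, y0, 0, \<eta>0) \<rho> \<Longrightarrow> norm (B p) \<le> C"
    and Q_lower: "p \<in> cball (0, y0, 0, \<eta>0) \<rho> \<Longrightarrow> 1/4 \<le> Q p"
    and Q_upper: "p \<in> cball (0, y0, 0, \<eta>0) \<rho> \<Longrightarrow> Q p \<le> C"
begin

abbreviation nbhd :: "'m phase set" where "nbhd \<equiv> cball (0, y0, 0, \<eta>0) \<rho>"

(* Constants of the a priori bounds up to time 2 pi: x^2 + xi^2 <= s^2 energy_factor,
   the distance to the glancing point is at most s drift_factor, and xi >= s/2 up to
   launch_time. *)
definition energy_factor :: real where "energy_factor = exp (2 * pi * (1 + C))"

definition drift_factor :: real where "drift_factor = 2 * energy_factor * (1 + 2 * pi * C)"

definition launch_time :: real where "launch_time = 1 / (2 * C * energy_factor + 1)"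

lemma C_ge_quarter: "1/4 \<le> C"
  using Q_lower[of "(0, y0, 0, \<eta>0)"] Q_upper[of "(0, y0, 0, \<eta>0)"] radius_pos by simp

lemma energy_factor_ge: "1 \<le> energy_factor"
  unfolding energy_factor_def using C_ge_quarter by simp

lemma drift_factor_ge: "1 \<le> drift_factor"
proof -
  have "1 * 1 \<le> energy_factor * (1 + 2 * pi * C)"
    using energy_factor_ge C_ge_quarter by (intro mult_mono) auto
  then show ?thesis unfolding drift_factor_def by simp
qed

lemma launch_time_pos: "0 < launch_time" and launch_time_le: "launch_time \<le> 1"
proof -
  have "0 \<le> 2 * C * energy_factor" using C_ge_quarter energy_factor_ge by simp
  then show "0 < launch_time" "launch_time \<le> 1" unfolding launch_time_def by simp_all
qed

lemma integral_curve_derivatives: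
  assumes "integral_curve F a \<gamma>" "t \<in> {0..a}"
  shows "((\<lambda>t. coord_x (\<gamma> t)) has_real_derivative coord_xi (\<gamma> t)) (at t within {0..a})"
    and "((\<lambda>t. coord_y (\<gamma> t)) has_vector_derivative coord_x (\<gamma> t) ^ 2 *\<^sub>R A (\<gamma> t)) (at t within {0..a})"
    and "((\<lambda>t. coord_xi (\<gamma> t)) has_real_derivative - coord_x (\<gamma> t) * Q (\<gamma> t)) (at t within {0..a})"
    and "((\<lambda>t. coord_eta (\<gamma> t)) has_vector_derivative coord_x (\<gamma> t) ^ 2 *\<^sub>R B (\<gamma> t)) (at t within {0..a})"
  using has_vector_derivative_coords[of \<gamma> "F (\<gamma> t)" t "{0..a}"] assms
  unfolding integral_curve_def field_x field_y field_xi field_eta by auto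

lemma energy_bound:
  assumes curve: "integral_curve F a \<gamma>" and inN: "\<And>t. t \<in> {0..a} \<Longrightarrow> \<gamma> t \<in> nbhd"
    and start: "\<gamma> 0 = (0, y0, s, \<eta>0)" and a: "a \<le> 2 * pi" and t: "t \<in> {0..a}"
  shows "coord_x (\<gamma> t) ^ 2 + coord_xi (\<gamma> t) ^ 2 \<le> s ^ 2 * energy_factor"
proof -
  define X where "X = (\<lambda>u. coord_x (\<gamma> u))"
  define \<Xi> where "\<Xi> = (\<lambda>u. coord_xi (\<gamma> u))"
  define c where "c = 1 + C"
  \<comment> \<open>Gronwall: (x^2 + xi^2)' = 2 x xi (1 - Q) <= (1 + C) (x^2 + xi^2) on the ball.\<close>
  define E where "E = (\<lambda>u. exp (- (c * u)) * (X u ^ 2 + \<Xi> u ^ 2))"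
  have dE: "(E has_real_derivative
      exp (- (c * u)) * (2 * X u * \<Xi> u * (1 - Q (\<gamma> u)) - c * (X u ^ 2 + \<Xi> u ^ 2))) (at u within {0..a})"
    if u: "u \<in> {0..a}" for u
  proof -
    have dX: "(X has_real_derivative \<Xi> u) (at u within {0..a})"
      using integral_curve_derivatives(1)[OF curve u] unfolding X_def \<Xi>_def .
    have d\<Xi>: "(\<Xi> has_real_derivative - X u * Q (\<gamma> u)) (at u within {0..a})"
      using integral_curve_derivatives(3)[OF curve u] unfolding X_def \<Xi>_def .
    show ?thesis
      unfolding E_def by (rule derivative_eq_intros dX d\<Xi> refl | simp add: algebra_simps)+
  qed
  have "2 * X u * \<Xi> u * (1 - Q (\<gamma> u)) \<le> c * (X u ^ 2 + \<Xi> u ^ 2)" if u: "u \<in> {0..a}" for u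
  proof -
    have "\<bar>2 * X u * \<Xi> u\<bar> \<le> X u ^ 2 + \<Xi> u ^ 2"
      using sum_squares_bound[of "X u" "\<Xi> u"] sum_squares_bound[of "- X u" "\<Xi> u"]
      by (simp add: abs_le_iff)
    moreover have "\<bar>1 - Q (\<gamma> u)\<bar> \<le> c"
      using Q_lower[OF inN[OF u]] Q_upper[OF inN[OF u]] unfolding c_def by linarith
    ultimately have "\<bar>2 * X u * \<Xi> u\<bar> * \<bar>1 - Q (\<gamma> u)\<bar> \<le> (X u ^ 2 + \<Xi> u ^ 2) * c"
      by (rule mult_mono) simp_all
    moreover have "2 * X u * \<Xi> u * (1 - Q (\<gamma> u)) \<le> \<bar>2 * X u * \<Xi> u\<bar> * \<bar>1 - Q (\<gamma> u)\<bar>"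
      by (metis abs_ge_self abs_mult)
    ultimately show ?thesis by (simp add: mult.commute)
  qed
  then have "E t \<le> E 0"
    using DERIV_within_nonpos_imp_decreasing[OF dE _ t] by (simp add: mult_nonneg_nonpos)
  then have "exp (- (c * t)) * (X t ^ 2 + \<Xi> t ^ 2) \<le> s ^ 2"
    unfolding E_def X_def \<Xi>_def using start by simp
  then have "exp (c * t) * (exp (- (c * t)) * (X t ^ 2 + \<Xi> t ^ 2)) \<le> exp (c * t) * s ^ 2"
    by (rule mult_left_mono) simp
  then have "X t ^ 2 + \<Xi> t ^ 2 \<le> exp (c * t) * s ^ 2"
    by (simp add: mult.assoc[symmetric] exp_add[symmetric])
  also have "\<dots> \<le> energy_factor * s ^ 2"
  proof (rule mult_right_mono)
    have "c * t \<le> c * (2 * pi)" by (rule mult_left_mono) (use t a C_ge_quarter in \<open>auto simp: c_def\<close>)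
    then show "exp (c * t) \<le> energy_factor" unfolding energy_factor_def c_def by (simp add: mult.commute)
  qed simp
  finally show ?thesis unfolding X_def \<Xi>_def by (simp add: mult.commute)
qed

lemma coord_bounds:
  assumes "integral_curve F a \<gamma>" "\<And>t. t \<in> {0..a} \<Longrightarrow> \<gamma> t \<in> nbhd"
    and "\<gamma> 0 = (0, y0, s, \<eta>0)" "0 \<le> s" "a \<le> 2 * pi" "t \<in> {0..a}"
  shows "\<bar>coord_x (\<gamma> t)\<bar> \<le> s * energy_factor" "\<bar>coord_xi (\<gamma> t)\<bar> \<le> s * energy_factor"
proof -
  have "1 * energy_factor \<le> energy_factor * energy_factor"
    by (rule mult_right_mono[OF energy_factor_ge]) (use energy_factor_ge in simp)
  then have "s ^ 2 * (1 * energy_factor) \<le> s ^ 2 * (energy_factor * energy_factor)"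
    by (rule mult_left_mono) simp
  then have "s ^ 2 * energy_factor \<le> (s * energy_factor) ^ 2"
    by (simp add: power2_eq_square mult_ac)
  moreover have "0 \<le> s * energy_factor" using assms(4) energy_factor_ge by simp
  ultimately have bound: "\<bar>z\<bar> \<le> s * energy_factor" if "z ^ 2 \<le> s ^ 2 * energy_factor" for z :: real
    using that abs_le_square_iff[of z "s * energy_factor"] by simp
  show "\<bar>coord_x (\<gamma> t)\<bar> \<le> s * energy_factor" "\<bar>coord_xi (\<gamma> t)\<bar> \<le> s * energy_factor"
    using energy_bound[OF assms(1,2,3,5,6)] zero_le_power2[of "coord_x (\<gamma> t)"]
      zero_le_power2[of "coord_xi (\<gamma> t)"]
    by (intro bound; linarith)+
qed

lemma drift_bound:
  assumes curve: "integral_curve F a \<gamma>" and inN: "\<And>t. t \<in> {0..a} \<Longrightarrow> \<gamma> t \<in> nbhd"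
    and start: "\<gamma> 0 = (0, y0, s, \<eta>0)" and s: "0 \<le> s" "s \<le> 1" and a: "a \<le> 2 * pi"
    and t: "t \<in> {0..a}"
  shows "dist (\<gamma> t) (0, y0, 0, \<eta>0) \<le> s * drift_factor"
proof -
  have x2: "coord_x (\<gamma> u) ^ 2 \<le> s ^ 2 * energy_factor" if u: "u \<in> {0..a}" for u
    using energy_bound[OF curve inN start a u] zero_le_power2[of "coord_xi (\<gamma> u)"] by linarith
  have "s ^ 2 * energy_factor * C * t \<le> s * energy_factor * C * (2 * pi)"
  proof -
    have "s ^ 2 \<le> s" using s by (simp add: power2_eq_square mult_left_le_one_le)
    then show ?thesis using t a C_ge_quarter energy_factor_ge s by (intro mult_mono) auto
  qed
  moreover have "norm (coord_y (\<gamma> t) - coord_y (\<gamma> 0)) \<le> s ^ 2 * energy_factor * C * (t - 0)"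
  proof (rule has_vector_derivative_bound_imp_norm_diff_le[OF integral_curve_derivatives(2)[OF curve]])
    fix u assume u: "u \<in> {0..a}"
    have "norm (coord_x (\<gamma> u) ^ 2 *\<^sub>R A (\<gamma> u)) = coord_x (\<gamma> u) ^ 2 * norm (A (\<gamma> u))"
      by simp
    also have "\<dots> \<le> s ^ 2 * energy_factor * C"
      by (rule mult_mono[OF x2[OF u] A_bound[OF inN[OF u]]]) (use energy_factor_ge in simp_all)
    finally show "norm (coord_x (\<gamma> u) ^ 2 *\<^sub>R A (\<gamma> u)) \<le> s ^ 2 * energy_factor * C" .
  qed (use t in auto)
  moreover have "norm (coord_eta (\<gamma> t) - coord_eta (\<gamma> 0)) \<le> s ^ 2 * energy_factor * C * (t - 0)"
  proof (rule has_vector_derivative_bound_imp_norm_diff_le[OF integral_curve_derivatives(4)[OF curve]])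
    fix u assume u: "u \<in> {0..a}"
    have "norm (coord_x (\<gamma> u) ^ 2 *\<^sub>R B (\<gamma> u)) = coord_x (\<gamma> u) ^ 2 * norm (B (\<gamma> u))"
      by simp
    also have "\<dots> \<le> s ^ 2 * energy_factor * C"
      by (rule mult_mono[OF x2[OF u] B_bound[OF inN[OF u]]]) (use energy_factor_ge in simp_all)
    finally show "norm (coord_x (\<gamma> u) ^ 2 *\<^sub>R B (\<gamma> u)) \<le> s ^ 2 * energy_factor * C" .
  qed (use t in auto)
  moreover have "dist (\<gamma> t) (0, y0, 0, \<eta>0) \<le> \<bar>coord_x (\<gamma> t)\<bar> + norm (coord_y (\<gamma> t) - y0)
      + \<bar>coord_xi (\<gamma> t)\<bar> + norm (coord_eta (\<gamma> t) - \<eta>0)"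
    using norm_phase_le[of "\<gamma> t - (0, y0, 0, \<eta>0)"] by (simp add: dist_norm)
  ultimately show ?thesis
    using coord_bounds[OF curve inN start s(1) a t] start
    unfolding drift_factor_def real_norm_def by (simp add: algebra_simps)
qed

lemma stays_in_nbhd:
  assumes curve: "integral_curve \<Phi> a \<gamma>" and \<Phi>: "\<And>p. p \<in> nbhd \<Longrightarrow> \<Phi> p = F p"
    and start: "\<gamma> 0 = (0, y0, s, \<eta>0)" and s: "0 \<le> s" "s \<le> 1" "s * drift_factor < \<rho>"
    and a: "a \<le> 2 * pi" and t: "t \<in> {0..a}"
  shows "\<gamma> t \<in> nbhd"
proof (rule ccontr)
  \<comment> \<open>At its first time on the sphere the curve would already be strictly inside by drift_bound.\<close>
  assume "\<gamma> t \<notin> nbhd"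
  define d where "d = (\<lambda>u. dist (\<gamma> u) (0, y0, 0, \<eta>0))"
  have cont: "continuous_on {0..a} d"
    unfolding d_def by (intro continuous_intros integral_curve_continuous_on[OF curve])
  have d0: "d 0 < \<rho>"
    using start s drift_factor_ge mult_left_mono[OF drift_factor_ge s(1)] unfolding d_def
    by (simp add: dist_Pair_Pair)
  have dt: "\<rho> \<le> d t" using \<open>\<gamma> t \<notin> nbhd\<close> unfolding d_def by (simp add: dist_commute)
  obtain t1 where t1: "t1 \<in> {0<..t}" "d t1 = \<rho>" and below: "\<And>u. u \<in> {0..<t1} \<Longrightarrow> d u < \<rho>"
    using continuous_on_first_crossing[OF cont d0 t dt] by blast
  have inN: "\<gamma> u \<in> nbhd" if "u \<in> {0..t1}" for u
    using that below[of u] t1(2) unfolding d_def by (cases "u = t1") (auto simp: dist_commute)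
  have "integral_curve \<Phi> t1 \<gamma>"
    by (rule integral_curve_restrict[OF curve]) (use t1 t in auto)
  then have curve1: "integral_curve F t1 \<gamma>"
    by (rule integral_curve_cong) (metis \<Phi> inN)
  have "t1 \<le> 2 * pi" using t1 t a by simp
  then have "d t1 \<le> s * drift_factor"
    unfolding d_def using drift_bound[OF curve1 inN start s(1,2), of t1] t1 by simp
  then show False using t1(2) s(3) by simp
qed

lemma returns_within_2pi:
  assumes curve: "integral_curve F (2 * pi) \<gamma>" and inN: "\<And>t. t \<in> {0..2 * pi} \<Longrightarrow> \<gamma> t \<in> nbhd"
    and start: "coord_x (\<gamma> 0) = 0"
  shows "\<exists>t\<in>{0<..2 * pi}. coord_x (\<gamma> t) \<le> 0"
proof (rule ccontr)
  assume no_return: "\<not> ?thesis"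
  have pos: "0 \<le> coord_x (\<gamma> t)" if t: "t \<in> {0..2 * pi}" for t
  proof (cases "t = 0")
    case False
    then have "t \<in> {0<..2 * pi}" using t by auto
    then have "\<not> coord_x (\<gamma> t) \<le> 0" using no_return by blast
    then show ?thesis by simp
  qed (use start in simp)
  define X where "X = (\<lambda>u. coord_x (\<gamma> u))"
  define \<Xi> where "\<Xi> = (\<lambda>u. coord_xi (\<gamma> u))"
  \<comment> \<open>Sturm comparison with the solution sin (u/2) of x'' = - x/4, which vanishes again at 2 pi.\<close>
  define W where "W = (\<lambda>u. \<Xi> u * sin (u / 2) - X u * cos (u / 2) / 2)"
  have dW: "(W has_real_derivative X u * sin (u / 2) * (1/4 - Q (\<gamma> u))) (at u within {0..2 * pi})"
    if u: "u \<in> {0..2 * pi}" for u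
  proof -
    have dX: "(X has_real_derivative \<Xi> u) (at u within {0..2 * pi})"
      using integral_curve_derivatives(1)[OF curve u] unfolding X_def \<Xi>_def .
    have d\<Xi>: "(\<Xi> has_real_derivative - X u * Q (\<gamma> u)) (at u within {0..2 * pi})"
      using integral_curve_derivatives(3)[OF curve u] unfolding X_def \<Xi>_def .
    show ?thesis
      unfolding W_def by (rule derivative_eq_intros dX d\<Xi> refl | simp add: field_simps)+
  qed
  have nonpos: "X u * sin (u / 2) * (1/4 - Q (\<gamma> u)) \<le> 0" if u: "u \<in> {0..2 * pi}" for u
  proof -
    have "0 \<le> X u * sin (u / 2)"
      using pos[OF u] u unfolding X_def by (intro mult_nonneg_nonneg sin_ge_zero) auto
    then show ?thesis using Q_lower[OF inN[OF u]] by (simp add: mult_nonneg_nonpos)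
  qed
  have "W (2 * pi) \<le> W 0"
    using DERIV_within_nonpos_imp_decreasing[OF dW nonpos, of "2 * pi"] by simp
  then have "X (2 * pi) \<le> 0" unfolding W_def X_def using start by simp
  then show False using no_return unfolding X_def by auto
qed

lemma leaves_boundary:
  assumes curve: "integral_curve F a \<gamma>" and inN: "\<And>t. t \<in> {0..a} \<Longrightarrow> \<gamma> t \<in> nbhd"
    and start: "\<gamma> 0 = (0, y0, s, \<eta>0)" and s: "0 < s" and a: "launch_time \<le> a" "a \<le> 2 * pi"
    and t: "t \<in> {0<..launch_time}"
  shows "0 < coord_x (\<gamma> t)"
proof -
  define X where "X = (\<lambda>u. coord_x (\<gamma> u))"
  define \<Xi> where "\<Xi> = (\<lambda>u. coord_xi (\<gamma> u))"
  have d\<Xi>: "(\<Xi> has_vector_derivative - X v * Q (\<gamma> v)) (at v within {0..a})" if v: "v \<in> {0..a}" for v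
    using integral_curve_derivatives(3)[OF curve v]
    unfolding X_def \<Xi>_def has_real_derivative_iff_has_vector_derivative .
  have "norm (- X v * Q (\<gamma> v)) \<le> s * energy_factor * C" if v: "v \<in> {0..a}" for v
  proof -
    have "\<bar>X v\<bar> \<le> s * energy_factor"
      using coord_bounds(1)[OF curve inN start _ a(2) v] s unfolding X_def by simp
    moreover have "\<bar>Q (\<gamma> v)\<bar> \<le> C" using Q_lower[OF inN[OF v]] Q_upper[OF inN[OF v]] by simp
    ultimately show ?thesis
      unfolding real_norm_def abs_mult abs_minus_cancel
      by (rule mult_mono) (use s energy_factor_ge in simp_all)
  qed
  then have "norm (\<Xi> u - \<Xi> 0) \<le> s * energy_factor * C * (u - 0)" if "u \<in> {0..a}" for u
    using has_vector_derivative_bound_imp_norm_diff_le[OF d\<Xi>] that by blast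
  moreover have "s * energy_factor * C * u \<le> s / 2" if "u \<in> {0..launch_time}" for u
  proof -
    have "energy_factor * C * u \<le> energy_factor * C * launch_time"
      using that C_ge_quarter energy_factor_ge by (intro mult_left_mono) auto
    also have "\<dots> \<le> 1/2"
    proof -
      have "0 \<le> 2 * C * energy_factor" using C_ge_quarter energy_factor_ge by simp
      then show ?thesis unfolding launch_time_def by (simp add: field_simps)
    qed
    finally have "s * (energy_factor * C * u) \<le> s * (1/2)"
      using s by (intro mult_left_mono) auto
    then show ?thesis by (simp add: mult.assoc)
  qed
  ultimately have \<Xi>_lower: "s / 2 \<le> \<Xi> u" if "u \<in> {0..launch_time}" for u
    using that a start unfolding \<Xi>_def by (fastforce simp: abs_le_iff)
  have curve': "integral_curve F launch_time \<gamma>" using curve a(1) by (rule integral_curve_restrict)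
  have "((\<lambda>u. X u - s * u / 2) has_real_derivative \<Xi> u - s / 2) (at u within {0..launch_time})"
    if "u \<in> {0..launch_time}" for u
    using integral_curve_derivatives(1)[OF curve' that] unfolding X_def \<Xi>_def
    by (auto intro!: derivative_eq_intros)
  then have "X 0 - s * 0 / 2 \<le> X t - s * t / 2"
    using DERIV_within_nonneg_imp_increasing[of 0 launch_time "\<lambda>u. X u - s * u / 2"] \<Xi>_lower t
    by fastforce
  moreover have "0 < s * t / 2" using s t by simp
  ultimately show ?thesis using start unfolding X_def by simp
qed

lemma exit_time_estimates:
  assumes curve: "integral_curve F T \<gamma>" and start: "\<gamma> 0 = (0, y0, s, \<eta>0)"
    and pos: "\<forall>t\<in>{0<..<T}. 0 < coord_x (\<gamma> t)"
    and s: "0 \<le> s" "s \<le> 1" "s * drift_factor < \<rho>"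
  shows "T \<le> 2 * pi" and "\<forall>t\<in>{0..T}. dist (\<gamma> t) (0, y0, 0, \<eta>0) \<le> s * drift_factor"
proof -
  define a where "a = min T (2 * pi)"
  have curve_a: "integral_curve F a \<gamma>" using curve by (rule integral_curve_restrict) (simp add: a_def)
  have inN: "\<gamma> t \<in> nbhd" if "t \<in> {0..a}" for t
    using stays_in_nbhd[OF curve_a _ start s] that by (simp add: a_def)
  show T: "T \<le> 2 * pi"
  proof (rule ccontr)
    assume "\<not> T \<le> 2 * pi"
    then have "a = 2 * pi" by (simp add: a_def)
    then obtain t where "t \<in> {0<..2 * pi}" "coord_x (\<gamma> t) \<le> 0"
      using returns_within_2pi[of \<gamma>] curve_a inN start by auto
    then show False using pos \<open>\<not> T \<le> 2 * pi\<close> by force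
  qed
  then have "a = T" by (simp add: a_def)
  then show "\<forall>t\<in>{0..T}. dist (\<gamma> t) (0, y0, 0, \<eta>0) \<le> s * drift_factor"
    using drift_bound[OF curve _ start s(1,2) T] inN by auto
qed

lemma exit_trajectory_exists:
  assumes lip: "L-lipschitz_on nbhd F" and s: "0 < s" "s \<le> 1" "s * drift_factor < \<rho>"
  obtains \<gamma> T where "0 < T" "\<gamma> 0 = (0, y0, s, \<eta>0)" "integral_curve F T \<gamma>"
    "\<forall>t\<in>{0..T}. \<gamma> t \<in> nbhd" "\<forall>t\<in>{0<..<T}. 0 < coord_x (\<gamma> t)" "coord_x (\<gamma> T) = 0"
proof -
  \<comment> \<open>A globally Lipschitz extension of F; it agrees with F along the curve by stays_in_nbhd.\<close>
  define G where "G = (\<lambda>p. F (closest_point nbhd p))"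
  have "L-lipschitz_on UNIV G"
    unfolding G_def using radius_pos by (intro lipschitz_on_closest_point_extension[OF lip]) auto
  moreover have "0 \<le> 2 * pi" by simp
  ultimately obtain \<gamma> where start: "\<gamma> 0 = (0, y0, s, \<eta>0)" and curve_G: "integral_curve G (2 * pi) \<gamma>"
    by (rule lipschitz_integral_curve_exists)
  have G: "G p = F p" if "p \<in> nbhd" for p
    unfolding G_def using that by (simp add: closest_point_self)
  have inN: "\<gamma> t \<in> nbhd" if "t \<in> {0..2 * pi}" for t
    using stays_in_nbhd[OF curve_G G start _ s(2,3) _ that] s(1) by simp
  have curve: "integral_curve F (2 * pi) \<gamma>"
    using curve_G by (rule integral_curve_cong) (metis G inN)
  obtain t1 where t1: "t1 \<in> {0<..2 * pi}" "coord_x (\<gamma> t1) \<le> 0"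
    using returns_within_2pi[OF curve inN] start by auto
  have lt: "launch_time \<le> 2 * pi" using launch_time_le pi_ge_two by simp
  have launch: "0 < coord_x (\<gamma> t)" if "t \<in> {0<..launch_time}" for t
    using leaves_boundary[OF curve inN start s(1) lt order_refl that] .
  have "launch_time < t1" using t1 launch[of t1] by force
  have "continuous_on {launch_time..2 * pi} (\<lambda>u. - coord_x (\<gamma> u))"
    using integral_curve_continuous_on[OF curve] launch_time_pos
    by (intro continuous_intros) (auto elim: continuous_on_subset)
  moreover have "- coord_x (\<gamma> launch_time) < 0" using launch[of launch_time] launch_time_pos by simp
  moreover have "t1 \<in> {launch_time..2 * pi}" "0 \<le> - coord_x (\<gamma> t1)"
    using t1 \<open>launch_time < t1\<close> by auto
  ultimately obtain T where T: "T \<in> {launch_time<..t1}" "coord_x (\<gamma> T) = 0"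
    and below: "\<And>u. u \<in> {launch_time..<T} \<Longrightarrow> 0 < coord_x (\<gamma> u)"
    by (rule continuous_on_first_crossing) auto
  show thesis
  proof (rule that)
    show "0 < T" using T launch_time_pos by simp
    show "integral_curve F T \<gamma>" using curve by (rule integral_curve_restrict) (use T t1 in simp)
    show "\<forall>t\<in>{0..T}. \<gamma> t \<in> nbhd" using inN T t1 by simp
    show "\<forall>t\<in>{0<..<T}. 0 < coord_x (\<gamma> t)"
    proof
      fix t assume "t \<in> {0<..<T}"
      then show "0 < coord_x (\<gamma> t)" using launch[of t] below[of t] by (cases "t \<le> launch_time") auto
    qed
  qed (use start T in simp_all)
qed

end

section \<open>The Hamiltonian field of a gas giant\<close>

definition ham_A :: "(real \<Rightarrow> real^'m \<Rightarrow> real^'m^'m) \<Rightarrow> 'm::finite phase \<Rightarrow> real^'m" where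
  "ham_A hinv p = (\<chi> i. \<Sum>j\<in>UNIV. hinv (coord_x p) (coord_y p) $ i $ j * coord_eta p $ j)"

definition ham_B :: "(real \<Rightarrow> real^'m \<Rightarrow> real^'m^'m) \<Rightarrow> 'm::finite phase \<Rightarrow> real^'m" where
  "ham_B hinv p = (\<chi> i. - (1/2 * (\<Sum>k\<in>UNIV. \<Sum>j\<in>UNIV.
      dy_hinv hinv (coord_x p) (coord_y p) i k j * coord_eta p $ k * coord_eta p $ j)))"

definition ham_Q :: "(real \<Rightarrow> real^'m \<Rightarrow> real^'m^'m) \<Rightarrow> 'm::finite phase \<Rightarrow> real" where
  "ham_Q hinv p = hquad hinv (coord_x p) (coord_y p) (coord_eta p) + coord_x p / 2 *
      (\<Sum>i\<in>UNIV. \<Sum>j\<in>UNIV. dx_hinv hinv (coord_x p) (coord_y p) i j * coord_eta p $ i * coord_eta p $ j)"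

lemma ham_field_coords:
  fixes p :: "'m::finite phase"
  shows "coord_x (ham_field hinv p) = coord_xi p"
    and "coord_y (ham_field hinv p) = coord_x p ^ 2 *\<^sub>R ham_A hinv p"
    and "coord_xi (ham_field hinv p) = - coord_x p * ham_Q hinv p"
    and "coord_eta (ham_field hinv p) = coord_x p ^ 2 *\<^sub>R ham_B hinv p"
proof -
  show "coord_x (ham_field hinv p) = coord_xi p"
    unfolding ham_field_def by (simp add: Let_def)
  show "coord_y (ham_field hinv p) = coord_x p ^ 2 *\<^sub>R ham_A hinv p"
    unfolding ham_field_def ham_A_def by (simp add: Let_def vec_eq_iff)
  show "coord_xi (ham_field hinv p) = - coord_x p * ham_Q hinv p"
    unfolding ham_field_def ham_Q_def by (simp add: Let_def algebra_simps power2_eq_square)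
  show "coord_eta (ham_field hinv p) = coord_x p ^ 2 *\<^sub>R ham_B hinv p"
    unfolding ham_field_def ham_B_def by (simp add: Let_def vec_eq_iff algebra_simps)
qed

lemma dist_base_le:
  fixes p q :: "'m::finite phase"
  shows "dist (coord_x p, coord_y p) (coord_x q, coord_y q) \<le> dist p q"
proof -
  have "dist (coord_y p) (coord_y q) \<le> dist (snd p) (snd q)" by (rule dist_fst_le)
  then have "(dist (coord_y p) (coord_y q))\<^sup>2 \<le> (dist (snd p) (snd q))\<^sup>2" by (simp add: power_mono)
  then show ?thesis
    using dist_Pair_Pair[of "fst p" "snd p" "fst q" "snd q"] by (simp add: dist_Pair_Pair)
qed

lemma ham_coefficients_lipschitzian:
  fixes hinv :: "real \<Rightarrow> real^'m::finite \<Rightarrow> real^'m^'m" and y0 \<eta>0 :: "real^'m"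
  assumes C2: "\<And>i j. Ck_on 2 (\<lambda>(x, y). hinv x y $ i $ j) U" and K: "cball (0, y0) r \<subseteq> U"
  defines "N \<equiv> cball (0, y0, 0, \<eta>0) r"
  shows "lipschitzian_on N (ham_field hinv)" and "lipschitzian_on N (ham_A hinv)"
    and "lipschitzian_on N (ham_B hinv)" and "lipschitzian_on N (ham_Q hinv)"
proof -
  have bN: "bounded N" unfolding N_def by simp
  have proj: "lipschitzian_on N (\<lambda>p. (coord_x p, coord_y p))"
    by (intro bounded_linear_lipschitzian_on bounded_linear_Pair bounded_linear_fst
        bounded_linear_compose[OF bounded_linear_fst bounded_linear_snd, unfolded o_def])
  have proj_image: "(\<lambda>p. (coord_x p, coord_y p)) ` N \<subseteq> cball (0, y0) r"
  proof
    fix q assume "q \<in> (\<lambda>p. (coord_x p, coord_y p)) ` N"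
    then obtain p where p: "p \<in> N" "q = (coord_x p, coord_y p)" by blast
    then show "q \<in> cball (0, y0) r"
      using dist_base_le[of "(0, y0, 0, \<eta>0)" p] unfolding N_def by simp
  qed
  have base: "lipschitzian_on N (\<lambda>p. g (coord_x p, coord_y p))"
    if "Ck_on (Suc k) g U" for g :: "real \<times> (real^'m) \<Rightarrow> real" and k
  proof -
    have "lipschitzian_on (cball (0, y0) r) g"
      using that K by (rule Ck_on_Suc_imp_lipschitzian_on) auto
    then show ?thesis by (rule lipschitzian_on_compose[OF proj _ proj_image])
  qed
  have partial: "Ck_on (Suc 0) (\<lambda>q. frechet_derivative (\<lambda>(x, y). hinv x y $ i $ j) (at q) b) U"
    if "b \<in> Basis" for b i j
    using C2[of i j] that by (simp add: numeral_2_eq_2)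
  have h: "lipschitzian_on N (\<lambda>p. hinv (coord_x p) (coord_y p) $ i $ j)" for i j
    using base[OF C2[of i j, unfolded numeral_2_eq_2]] by simp
  have dx: "lipschitzian_on N (\<lambda>p. dx_hinv hinv (coord_x p) (coord_y p) i j)" for i j
    using base[OF partial[of "(1, 0)"]] unfolding dx_hinv_def by (simp add: Basis_prod_def)
  have dy: "lipschitzian_on N (\<lambda>p. dy_hinv hinv (coord_x p) (coord_y p) k i j)" for k i j
    using base[OF partial[of "(0, axis k 1)"]] unfolding dy_hinv_def
    by (simp add: Basis_prod_def axis_in_Basis_iff)
  have snd2: "bounded_linear (\<lambda>p :: 'm phase. snd (snd p))"
    using bounded_linear_compose[OF bounded_linear_snd bounded_linear_snd] unfolding o_def .
  have x: "lipschitzian_on N (\<lambda>p. coord_x p)"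
    by (rule bounded_linear_lipschitzian_on[OF bounded_linear_fst])
  have xi: "lipschitzian_on N (\<lambda>p. coord_xi p)"
    using bounded_linear_compose[OF bounded_linear_fst snd2] unfolding o_def
    by (rule bounded_linear_lipschitzian_on)
  have eta: "lipschitzian_on N (\<lambda>p. coord_eta p $ i)" for i
    using bounded_linear_compose[OF bounded_linear_vec_nth bounded_linear_compose[OF bounded_linear_snd snd2]]
    unfolding o_def by (rule bounded_linear_lipschitzian_on)
  note intros = lipschitzian_on_divide lipschitzian_on_add lipschitzian_on_mult[OF _ _ bN] lipschitzian_on_minus
    lipschitzian_on_sum lipschitzian_on_power[OF _ bN] lipschitzian_on_const
  show A: "lipschitzian_on N (ham_A hinv)"
    unfolding ham_A_def by (intro lipschitzian_on_vec) (simp, intro intros h eta)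
  show B: "lipschitzian_on N (ham_B hinv)"
    unfolding ham_B_def by (intro lipschitzian_on_vec) (simp, intro intros dy eta)
  show Q: "lipschitzian_on N (ham_Q hinv)"
    unfolding ham_Q_def hquad_def by (intro intros h dx x eta)
  have "lipschitzian_on N (\<lambda>p. coord_x p ^ 2 *\<^sub>R ham_A hinv p)"
    by (intro lipschitzian_on_vec) (simp, intro intros x lipschitzian_on_vec_nth[OF A])
  moreover have "lipschitzian_on N (\<lambda>p. coord_x p ^ 2 *\<^sub>R ham_B hinv p)"
    by (intro lipschitzian_on_vec) (simp, intro intros x lipschitzian_on_vec_nth[OF B])
  moreover have "lipschitzian_on N (\<lambda>p. - coord_x p * ham_Q hinv p)"
    by (intro intros x Q)
  moreover have "ham_field hinv = (\<lambda>p. (coord_xi p, coord_x p ^ 2 *\<^sub>R ham_A hinv p,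
      - coord_x p * ham_Q hinv p, coord_x p ^ 2 *\<^sub>R ham_B hinv p))"
    by (simp add: fun_eq_iff prod_eq_iff ham_field_coords)
  ultimately show "lipschitzian_on N (ham_field hinv)"
    using xi by (simp add: lipschitzian_on_Pair)
qed

lemma ham_field_collar_field:
  fixes hinv :: "real \<Rightarrow> real^'m::finite \<Rightarrow> real^'m^'m" and y0 \<eta>0 :: "real^'m"
  assumes U: "open U" "(0, y0) \<in> U" and C2: "\<And>i j. Ck_on 2 (\<lambda>(x, y). hinv x y $ i $ j) U"
    and unit: "hquad hinv 0 y0 \<eta>0 = 1"
  obtains C \<rho> L where "collar_field (ham_field hinv) (ham_A hinv) (ham_B hinv) (ham_Q hinv) C \<rho> y0 \<eta>0"
    and "L-lipschitz_on (cball (0, y0, 0, \<eta>0) \<rho>) (ham_field hinv)"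
    and "\<And>p. p \<in> cball (0, y0, 0, \<eta>0) \<rho> \<Longrightarrow> (coord_x p, coord_y p) \<in> U"
proof -
  obtain r where r: "0 < r" "cball (0, y0) r \<subseteq> U" using U open_contains_cball by blast
  define p0 :: "'m phase" where "p0 = (0, y0, 0, \<eta>0)"
  define N where "N = cball p0 r"
  note lip = ham_coefficients_lipschitzian[OF C2 r(2), of \<eta>0, folded p0_def N_def]
  have bN: "bounded N" unfolding N_def by simp
  obtain LF where LF: "LF-lipschitz_on N (ham_field hinv)" using lip(1) by (rule lipschitzian_onE)
  obtain LQ where LQ: "LQ-lipschitz_on N (ham_Q hinv)" using lip(4) by (rule lipschitzian_onE)
  obtain CA where CA: "\<And>p. p \<in> N \<Longrightarrow> norm (ham_A hinv p) \<le> CA"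
    using lipschitzian_on_norm_bound[OF lip(2) bN] by blast
  obtain CB where CB: "\<And>p. p \<in> N \<Longrightarrow> norm (ham_B hinv p) \<le> CB"
    using lipschitzian_on_norm_bound[OF lip(3) bN] by blast
  obtain CQ where CQ: "\<And>p. p \<in> N \<Longrightarrow> norm (ham_Q hinv p) \<le> CQ"
    using lipschitzian_on_norm_bound[OF lip(4) bN] by blast
  \<comment> \<open>Small enough that the Lipschitz bound for Q gives |Q - 1| <= 3/4 on the ball.\<close>
  define \<rho> where "\<rho> = min r (3 / (4 * (LQ + 1)))"
  have LQ0: "0 \<le> LQ" using LQ by (rule lipschitz_on_nonneg)
  have \<rho>: "0 < \<rho>" "\<rho> \<le> r" using r LQ0 unfolding \<rho>_def by auto
  have sub: "cball p0 \<rho> \<subseteq> N" unfolding N_def using \<rho> by auto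
  have Q0: "ham_Q hinv p0 = 1" using unit unfolding p0_def ham_Q_def by simp
  have "1/4 \<le> ham_Q hinv p" if p: "p \<in> cball p0 \<rho>" for p
  proof -
    have "p \<in> N" "p0 \<in> N" using p sub r(1) unfolding N_def by auto
    then have "dist (ham_Q hinv p) (ham_Q hinv p0) \<le> LQ * dist p p0" by (rule lipschitz_onD[OF LQ])
    also have "\<dots> \<le> LQ * (3 / (4 * (LQ + 1)))"
      using p LQ0 unfolding \<rho>_def by (intro mult_left_mono) (auto simp: dist_commute)
    also have "\<dots> \<le> 3/4" using LQ0 by (simp add: field_simps)
    finally show ?thesis using Q0 unfolding dist_real_def abs_le_iff by linarith
  qed
  moreover define C where "C = max CQ (max CA CB)"
  moreover have "norm (ham_A hinv p) \<le> C" "norm (ham_B hinv p) \<le> C" "ham_Q hinv p \<le> C"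
    if "p \<in> cball p0 \<rho>" for p
    using CA[of p] CB[of p] CQ[of p] that sub unfolding C_def by (auto simp: le_max_iff_disj dest: abs_le_D1)
  ultimately interpret collar_field "ham_field hinv" "ham_A hinv" "ham_B hinv" "ham_Q hinv" C \<rho> y0 \<eta>0
    using \<rho>(1) unfolding p0_def by unfold_locales (simp_all add: ham_field_coords)
  show thesis
  proof (rule that)
    show "collar_field (ham_field hinv) (ham_A hinv) (ham_B hinv) (ham_Q hinv) C \<rho> y0 \<eta>0"
      by unfold_locales
    show "LF-lipschitz_on (cball (0, y0, 0, \<eta>0) \<rho>) (ham_field hinv)"
      using LF sub unfolding p0_def by (rule lipschitz_on_subset)
    show "(coord_x p, coord_y p) \<in> U" if "p \<in> cball (0, y0, 0, \<eta>0) \<rho>" for p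
      using that dist_base_le[of "(0, y0, 0, \<eta>0)" p] \<rho>(2) r(2) by auto
  qed
qed

lemma exit_trajectory_iff:
  "exit_trajectory hinv U y0 s \<eta>0 \<gamma> T \<longleftrightarrow>
     0 < T \<and> \<gamma> 0 = (0, y0, s, \<eta>0) \<and> integral_curve (ham_field hinv) T \<gamma> \<and>
     (\<forall>t\<in>{0..T}. (coord_x (\<gamma> t), coord_y (\<gamma> t)) \<in> U) \<and>
     (\<forall>t\<in>{0<..<T}. 0 < coord_x (\<gamma> t)) \<and> coord_x (\<gamma> T) = 0"
  unfolding exit_trajectory_def integral_curve_def by auto

lemma ham_exit_trajectories:
  assumes cf: "collar_field (ham_field hinv) (ham_A hinv) (ham_B hinv) (ham_Q hinv) C \<rho> y0 \<eta>0"
    and lip: "L-lipschitz_on (cball (0, y0, 0, \<eta>0) \<rho>) (ham_field hinv)"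
    and inU: "\<And>p. p \<in> cball (0, y0, 0, \<eta>0) \<rho> \<Longrightarrow> (coord_x p, coord_y p) \<in> U"
    and s: "0 < s" "s \<le> 1" "s * collar_field.drift_factor C < \<rho>"
  shows "\<exists>\<gamma> T. exit_trajectory hinv U y0 s \<eta>0 \<gamma> T"
    and "exit_trajectory hinv U y0 s \<eta>0 \<gamma> T \<Longrightarrow>
      T \<le> 2 * pi \<and> (\<forall>t\<in>{0..T}. dist (\<gamma> t) (0, y0, 0, \<eta>0) \<le> s * collar_field.drift_factor C)"
proof -
  interpret collar_field "ham_field hinv" "ham_A hinv" "ham_B hinv" "ham_Q hinv" C \<rho> y0 \<eta>0
    by (fact cf)
  obtain \<gamma>' T' where "0 < T'" "\<gamma>' 0 = (0, y0, s, \<eta>0)" "integral_curve (ham_field hinv) T' \<gamma>'"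
    "\<forall>t\<in>{0..T'}. \<gamma>' t \<in> nbhd" "\<forall>t\<in>{0<..<T'}. 0 < coord_x (\<gamma>' t)" "coord_x (\<gamma>' T') = 0"
    using lip s by (rule exit_trajectory_exists)
  then show "\<exists>\<gamma> T. exit_trajectory hinv U y0 s \<eta>0 \<gamma> T"
    unfolding exit_trajectory_iff using inU by blast
  show "T \<le> 2 * pi \<and> (\<forall>t\<in>{0..T}. dist (\<gamma> t) (0, y0, 0, \<eta>0) \<le> s * drift_factor)"
    if "exit_trajectory hinv U y0 s \<eta>0 \<gamma> T"
    using exit_time_estimates[of T \<gamma> s] that s unfolding exit_trajectory_iff by auto
qed

lemma small_speed_exit_trajectories:
  assumes cf: "collar_field (ham_field hinv) (ham_A hinv) (ham_B hinv) (ham_Q hinv) C \<rho> y0 \<eta>0"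
    and lip: "L-lipschitz_on (cball (0, y0, 0, \<eta>0) \<rho>) (ham_field hinv)"
    and inU: "\<And>p. p \<in> cball (0, y0, 0, \<eta>0) \<rho> \<Longrightarrow> (coord_x p, coord_y p) \<in> U"
    and e: "0 < e"
  obtains \<delta> where "0 < \<delta>"
    and "\<And>s. 0 < s \<Longrightarrow> s < \<delta> \<Longrightarrow> (\<exists>\<gamma> T. exit_trajectory hinv U y0 s \<eta>0 \<gamma> T) \<and>
      (\<forall>\<gamma> T. exit_trajectory hinv U y0 s \<eta>0 \<gamma> T \<longrightarrow>
        (\<forall>t\<in>{0..T}. dist (\<gamma> t) (0, y0, 0, \<eta>0) < e) \<and> s * T < e)"
proof -
  define K where "K = collar_field.drift_factor C"
  have K: "1 \<le> K" and \<rho>: "0 < \<rho>"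
    using collar_field.drift_factor_ge[OF cf] collar_field.radius_pos[OF cf] unfolding K_def .
  have "0 < K + 2 * pi" using K pi_gt_zero by linarith
  define \<delta> where "\<delta> = min 1 (min (\<rho> / K) (e / (K + 2 * pi)))"
  show thesis
  proof (rule that)
    show "0 < \<delta>" using \<open>0 < K + 2 * pi\<close> e \<rho> K unfolding \<delta>_def by simp
    fix s assume s: "0 < s" "s < \<delta>"
    then have small: "s \<le> 1" "s * K < \<rho>" "s * K + s * (2 * pi) < e"
      using K pi_gt_zero unfolding \<delta>_def by (auto simp: less_divide_eq pos_less_divide_eq algebra_simps)
    have "0 < s * K" "0 < s * (2 * pi)" using s(1) K by (intro mult_pos_pos; simp)+
    then have close: "s * K < e" and short: "s * (2 * pi) < e" using small(3) by linarith+
    note exits = ham_exit_trajectories[OF cf lip inU s(1) small(1) small(2)[unfolded K_def]]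
    have "(\<forall>t\<in>{0..T}. dist (\<gamma> t) (0, y0, 0, \<eta>0) < e) \<and> s * T < e"
      if "exit_trajectory hinv U y0 s \<eta>0 \<gamma> T" for \<gamma> T
    proof -
      have "T \<le> 2 * pi" "\<forall>t\<in>{0..T}. dist (\<gamma> t) (0, y0, 0, \<eta>0) \<le> s * K"
        using exits(2) that unfolding K_def by blast+
      moreover have "s * T \<le> s * (2 * pi)" using \<open>T \<le> 2 * pi\<close> s(1) by simp
      ultimately show ?thesis using close short by fastforce
    qed
    then show "(\<exists>\<gamma> T. exit_trajectory hinv U y0 s \<eta>0 \<gamma> T) \<and>
      (\<forall>\<gamma> T. exit_trajectory hinv U y0 s \<eta>0 \<gamma> T \<longrightarrow>
        (\<forall>t\<in>{0..T}. dist (\<gamma> t) (0, y0, 0, \<eta>0) < e) \<and> s * T < e)"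
      using exits(1) by blast
  qed
qed

theorem proposition5p1:
  fixes hinv :: "real \<Rightarrow> real^'m \<Rightarrow> real^'m^'m"
    and U :: "(real \<times> (real^'m)) set"
    and y0 :: "real^'m" and \<eta>0 :: "real^'m"
  assumes U_open: "open U" and y0_in: "(0, y0) \<in> U"
    and h_smooth: "\<forall>i j. smooth_on (\<lambda>(x, y). hinv x y $ i $ j) U"
    and h_sym: "\<forall>(x, y)\<in>U. \<forall>i j. hinv x y $ i $ j = hinv x y $ j $ i"
    and h_pos: "\<forall>(x, y)\<in>U. \<forall>v. v \<noteq> 0 \<longrightarrow> hquad hinv x y v > 0"
    and eta_unit: "hquad hinv 0 y0 \<eta>0 = 1"
  shows "\<forall>e>0. \<exists>\<delta>>0. \<forall>s. 0 < s \<and> s < \<delta> \<longrightarrow>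
           (\<exists>\<gamma> T. exit_trajectory hinv U y0 s \<eta>0 \<gamma> T) \<and>
           (\<forall>\<gamma> T. exit_trajectory hinv U y0 s \<eta>0 \<gamma> T \<longrightarrow>
              (\<forall>t\<in>{0..T}. dist (\<gamma> t) (0, y0, 0, \<eta>0) < e) \<and> s * T < e)"
proof (intro allI impI)
  fix e :: real assume "0 < e"
  have "\<And>i j. Ck_on 2 (\<lambda>(x, y). hinv x y $ i $ j) U" using h_smooth unfolding smooth_on_def by blast
  then obtain C \<rho> L where "collar_field (ham_field hinv) (ham_A hinv) (ham_B hinv) (ham_Q hinv) C \<rho> y0 \<eta>0"
    and "L-lipschitz_on (cball (0, y0, 0, \<eta>0) \<rho>) (ham_field hinv)"
    and "\<And>p. p \<in> cball (0, y0, 0, \<eta>0) \<rho> \<Longrightarrow> (coord_x p, coord_y p) \<in> U"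
    using ham_field_collar_field[OF U_open y0_in _ eta_unit] by blast
  then obtain \<delta> where "0 < \<delta>" and exits: "\<And>s. 0 < s \<Longrightarrow> s < \<delta> \<Longrightarrow>
      (\<exists>\<gamma> T. exit_trajectory hinv U y0 s \<eta>0 \<gamma> T) \<and>
      (\<forall>\<gamma> T. exit_trajectory hinv U y0 s \<eta>0 \<gamma> T \<longrightarrow>
        (\<forall>t\<in>{0..T}. dist (\<gamma> t) (0, y0, 0, \<eta>0) < e) \<and> s * T < e)"
    using small_speed_exit_trajectories \<open>0 < e\<close> by metis
  show "\<exists>\<delta>>0. \<forall>s. 0 < s \<and> s < \<delta> \<longrightarrow>
           (\<exists>\<gamma> T. exit_trajectory hinv U y0 s \<eta>0 \<gamma> T) \<and>
           (\<forall>\<gamma> T. exit_trajectory hinv U y0 s \<eta>0 \<gamma> T \<longrightarrow>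
              (\<forall>t\<in>{0..T}. dist (\<gamma> t) (0, y0, 0, \<eta>0) < e) \<and> s * T < e)"
    using \<open>0 < \<delta>\<close> exits by (intro exI[of _ \<delta>] conjI allI impI) auto
qed

end
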